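(* Let $X\subseteq\mathbb{N}$ be finite, $\omega^{n+6}$-large and exp-sparse. Then $X$ admits an $(\omega^n,\omega)$-grouping: for every colouring $P:[X]^2\to2$ there is an $(\omega^n,\omega)$-grouping for $P$.
   Context: Ordinals below $\omega^\omega$ are in Cantor normal form; $\omega^j\cdot m$ = sum of $m$ copies of $\omega^j$. For $m\in\mathbb{N}$: $0[m]=0$, $(\beta+1)[m]=\beta$, $(\beta+\omega^{n})[m]=\beta+\omega^{n-1}\cdot m$ for $n\ge1$. A finite $X=\{x_0<\dots<x_{\ell-1}\}\subseteq\mathbb{N}$ is $\alpha$-large if $\alpha[x_0]\cdots[x_{\ell-1}]=0$. A set $X$ with $\min X\ge3$ is exp-sparse if $x<y$ in $X$ implies $4^x<y$. For $P:[X]^2\to2$, a finite sequence $\langle F_i\subseteq X:i<\ell\rangle$ of finite sets is an $(\alpha,\beta)$-grouping for $P$ if: (1) $\max F_i<\min F_j$ for $i<j<\ell$; (2) each $F_i$ is $\alpha$-large; (3) $\{\max F_i:i<\ell\}$ is $\beta$-large; (4) for all $i<j<\ell$, $x,x'\in F_i$, $y,y'\in F_j$: $P(x,y)=P(x',y')$. *)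

theory Defs
  imports Main
begin

text \<open>Ordinals below omega^omega in Cantor normal form, represented as the
  non-increasing list of exponents [e1,...,ek] standing for
  omega^e1 + ... + omega^ek (the empty list is 0).\<close>

type_synonym cnf = "nat list"

definition omega_pow :: "nat \<Rightarrow> cnf" where
  "omega_pow n = [n]"

text \<open>Fundamental sequence: 0[m]=0, (b+1)[m]=b, (b+omega^(n+1))[m] = b + omega^n * m.\<close>
definition fund :: "cnf \<Rightarrow> nat \<Rightarrow> cnf" where
  "fund a m = (if a = [] then [] else
     (case last a of 0 \<Rightarrow> butlast a
                   | Suc k \<Rightarrow> butlast a @ replicate m k))"

definition large :: "cnf \<Rightarrow> nat set \<Rightarrow> bool" where
  "large a X \<longleftrightarrow> finite X \<and> foldl fund a (sorted_list_of_set X) = []"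

definition exp_sparse :: "nat set \<Rightarrow> bool" where
  "exp_sparse X \<longleftrightarrow> (\<forall>x\<in>X. 3 \<le> x) \<and> (\<forall>x\<in>X. \<forall>y\<in>X. x < y \<longrightarrow> 4 ^ x < y)"

definition grouping :: "cnf \<Rightarrow> cnf \<Rightarrow> nat set \<Rightarrow> (nat \<Rightarrow> nat \<Rightarrow> bool) \<Rightarrow> nat set list \<Rightarrow> bool" where
  "grouping a b X P Fs \<longleftrightarrow>
     (\<forall>i<length Fs. finite (Fs!i) \<and> Fs!i \<subseteq> X) \<and>
     (\<forall>i j. i < j \<and> j < length Fs \<longrightarrow> Max (Fs!i) < Min (Fs!j)) \<and>
     (\<forall>i<length Fs. large a (Fs!i)) \<and>
     large b {Max (Fs!i) | i. i < length Fs} \<and>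
     (\<forall>i j. i < j \<and> j < length Fs \<longrightarrow>
        (\<forall>x\<in>Fs!i. \<forall>x'\<in>Fs!i. \<forall>y\<in>Fs!j. \<forall>y'\<in>Fs!j. P x y = P x' y'))"

end

theory Submission
  imports Defs "HOL-Library.Multiset"
begin

text \<open>
  Two facts about largeness drive everything: it is monotone along chains of fundamental steps
  with small arguments, and it is partition regular for natural sums: if a set is large for the
  natural sum of two ordinals, then for every 2-colouring the first colour class is large for the
  first ordinal or the second class for the second.

  Split an exp-sparse \<open>\<omega>\<^bsup>n+6\<^esup>\<close>-large set \<open>X\<close> into \<open>\<omega>\<^bsup>n+5\<^esup>\<close>-large pieces \<open>S\<^sub>1 < S\<^sub>2\<close>, and
  let \<open>H\<close> be \<open>S\<^sub>1\<close> without its minimum, an \<open>\<omega>\<^sup>n\<cdot>2\<close>-large set with maximum \<open>M\<close>.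
  Exp-sparseness puts \<open>min S\<^sub>2\<close> above \<open>4\<^sup>M \<ge> 2\<^bsup>|H|\<^esup>\<cdot>M\<close>, so colouring the rest of \<open>S\<^sub>2\<close> by
  \<open>y \<mapsto> {x \<in> H. P x y}\<close> leaves an \<open>\<omega>\<^bsup>n+2\<^esup>\<cdot>M\<close>-large class \<open>Q\<close>, and splitting \<open>H\<close> along that
  colour gives an \<open>\<omega>\<^sup>n\<close>-large \<open>G\<close> with \<open>P\<close> constant on \<open>G \<times> Q\<close>. Cut \<open>Q\<close> into \<open>M\<close> consecutive
  \<open>\<omega>\<^bsup>n+2\<^esup>\<close>-large blocks. From the first block to the last, each block is shrunk to an
  \<open>\<omega>\<^sup>n\<close>-large set on which the colour towards each later block is constant, after refining the
  later blocks by pigeonhole. A block without its minimum \<open>d\<close> is \<open>\<omega>\<^bsup>n+1\<^esup>\<cdot>d\<close>-large, and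
  exp-sparseness makes \<open>d\<close> at least \<open>2\<close> to the number of earlier elements, which pays for all
  these refinements. \<open>G\<close> followed by the \<open>M\<close> shrunk blocks is the grouping: there are
  \<open>M + 1 > max G\<close> of them, so their maxima form an \<open>\<omega>\<close>-large set.
\<close>

section \<open>Fundamental sequences and large lists\<close>

definition large_list :: "cnf \<Rightarrow> nat list \<Rightarrow> bool" where
  "large_list \<alpha> xs \<longleftrightarrow> foldl fund \<alpha> xs = []"

lemma fund_Nil [simp]: "fund [] m = []"
  by (simp add: fund_def)

lemma fund_snoc_0 [simp]: "fund (\<alpha> @ [0]) m = \<alpha>"
  by (simp add: fund_def)

lemma fund_snoc_Suc [simp]: "fund (\<alpha> @ [Suc k]) m = \<alpha> @ replicate m k"
  by (simp add: fund_def)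

lemma fund_append: "\<beta> \<noteq> [] \<Longrightarrow> fund (\<alpha> @ \<beta>) m = \<alpha> @ fund \<beta> m"
  by (simp add: fund_def butlast_append split: nat.split)

lemma fund_omega_pow: "0 < e \<Longrightarrow> fund (\<alpha> @ [e]) m = \<alpha> @ replicate m (e - 1)"
  by (cases e) simp_all

lemma large_list_zero [simp]: "large_list [] xs"
proof -
  have "foldl fund [] xs = []" by (induction xs) simp_all
  then show ?thesis by (simp add: large_list_def)
qed

lemma large_list_Nil [simp]: "large_list \<alpha> [] \<longleftrightarrow> \<alpha> = []"
  by (simp add: large_list_def)

lemma large_list_Cons [simp]: "large_list \<alpha> (x # xs) \<longleftrightarrow> large_list (fund \<alpha> x) xs"
  by (simp add: large_list_def)

definition fund_step :: "nat \<Rightarrow> cnf \<Rightarrow> cnf \<Rightarrow> bool" where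
  "fund_step m \<alpha> \<beta> \<longleftrightarrow> (\<exists>w\<le>m. \<beta> = fund \<alpha> w)"

lemma fund_step_fund: "w \<le> m \<Longrightarrow> (fund_step m)\<^sup>*\<^sup>* \<alpha> (fund \<alpha> w)"
  by (rule r_into_rtranclp) (auto simp: fund_step_def)

lemma fund_steps_mono:
  assumes "(fund_step m)\<^sup>*\<^sup>* \<alpha> \<beta>" "m \<le> m'"
  shows "(fund_step m')\<^sup>*\<^sup>* \<alpha> \<beta>"
  using assms(1)
proof (induction rule: rtranclp_induct)
  case (step \<beta> \<gamma>)
  then obtain w where "w \<le> m" "\<gamma> = fund \<beta> w"
    by (auto simp: fund_step_def)
  with assms(2) have "fund_step m' \<beta> \<gamma>"
    unfolding fund_step_def by (intro exI[of _ w]) simp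
  with step.IH show ?case by simp
qed simp

lemma fund_steps_from_zero: "(fund_step m)\<^sup>*\<^sup>* [] \<beta> \<Longrightarrow> \<beta> = []"
  by (induction rule: rtranclp_induct) (auto simp: fund_step_def)

lemma fund_steps_drop_copies: "(fund_step m)\<^sup>*\<^sup>* (\<alpha> @ replicate (j + i) k) (\<alpha> @ replicate j k)"
proof (induction i)
  case (Suc i)
  have "fund (\<alpha> @ replicate (j + i) k @ [k]) 0 = \<alpha> @ replicate (j + i) k"
    by (cases k) (simp_all flip: append_assoc)
  then have "fund_step m (\<alpha> @ replicate (j + Suc i) k) (\<alpha> @ replicate (j + i) k)"
    unfolding fund_step_def by (intro exI[of _ 0]) (simp add: replicate_append_same)
  with Suc show ?case
    by (meson converse_rtranclp_into_rtranclp)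
qed simp

text \<open>For \<open>w \<le> z\<close>, the ordinal \<open>\<alpha>[w][z]\<close> is reached from \<open>\<alpha>[z]\<close> by deleting \<open>z - w\<close> copies
  of the last term and then taking one more fundamental step.\<close>

lemma fund_steps_fund_fund:
  assumes "w \<le> z"
  shows "(fund_step z)\<^sup>*\<^sup>* (fund \<alpha> z) (fund (fund \<alpha> w) z)"
proof (cases \<alpha> rule: rev_exhaust)
  case (snoc \<alpha>' e)
  show ?thesis
  proof (cases e)
    case 0
    then show ?thesis using snoc by (simp add: fund_step_fund)
  next
    case (Suc k)
    have "(fund_step z)\<^sup>*\<^sup>* (\<alpha>' @ replicate z k) (\<alpha>' @ replicate w k)"
      using fund_steps_drop_copies[of z \<alpha>' w "z - w" k] assms by simp
    moreover have "(fund_step z)\<^sup>*\<^sup>* (\<alpha>' @ replicate w k) (fund (\<alpha>' @ replicate w k) z)"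
      by (rule fund_step_fund) simp
    ultimately show ?thesis using snoc Suc by simp
  qed
qed simp

lemma fund_steps_fund_cong:
  assumes "(fund_step m)\<^sup>*\<^sup>* \<alpha> \<beta>" "m \<le> z"
  shows "(fund_step z)\<^sup>*\<^sup>* (fund \<alpha> z) (fund \<beta> z)"
  using assms(1)
proof (induction rule: rtranclp_induct)
  case (step \<beta> \<gamma>)
  then obtain w where "w \<le> m" "\<gamma> = fund \<beta> w" by (auto simp: fund_step_def)
  with step.IH assms(2) fund_steps_fund_fund[of w z \<beta>] show ?case by simp
qed simp

text \<open>An element \<open>y\<close> of \<open>ys\<close> missing from \<open>xs\<close> is absorbed by the step from \<open>\<beta>\<close> to
  \<open>\<beta>[y]\<close>; a common element is handled by \<open>fund_steps_fund_cong\<close>.\<close>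

lemma large_list_mono:
  assumes "sorted_wrt (<) ys" "sorted_wrt (<) xs" "set xs \<subseteq> set ys"
    and "(fund_step m)\<^sup>*\<^sup>* \<alpha> \<beta>" "\<forall>y\<in>set ys. m \<le> y" "large_list \<alpha> xs"
  shows "large_list \<beta> ys"
  using assms
proof (induction ys arbitrary: xs \<alpha> \<beta> m)
  case Nil
  then show ?case by (auto dest: fund_steps_from_zero)
next
  case (Cons y ys)
  have ys: "sorted_wrt (<) ys" "\<forall>u\<in>set ys. y \<le> u"
    using Cons.prems(1) by auto
  show ?case
  proof (cases xs)
    case Nil
    with Cons.prems show ?thesis by (auto dest: fund_steps_from_zero)
  next
    case (Cons x xs')
    show ?thesis
    proof (cases "x = y")
      case True
      have "(fund_step y)\<^sup>*\<^sup>* (fund \<alpha> y) (fund \<beta> y)"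
        using fund_steps_fund_cong Cons.prems(4,5) by simp
      moreover have "set xs' \<subseteq> set ys"
        using Cons.prems(2,3) \<open>xs = x # xs'\<close> True by auto
      ultimately have "large_list (fund \<beta> y) ys"
        using Cons.IH[where xs=xs' and \<alpha>="fund \<alpha> y" and \<beta>="fund \<beta> y" and m=y]
          ys Cons.prems(2,6) \<open>xs = x # xs'\<close> True
        by simp
      then show ?thesis by simp
    next
      case False
      then have "y < x"
        using Cons.prems(1-3) \<open>xs = x # xs'\<close> by auto
      then have "set xs \<subseteq> set ys"
        using Cons.prems(2,3) \<open>xs = x # xs'\<close> by (auto dest: less_trans)
      moreover have "(fund_step y)\<^sup>*\<^sup>* \<alpha> (fund \<beta> y)"
        using fund_steps_mono[OF Cons.prems(4), of y] Cons.prems(5) fund_step_fund[of y y \<beta>]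
        by (simp add: rtranclp_trans)
      ultimately have "large_list (fund \<beta> y) ys"
        using Cons.IH[where xs=xs and \<alpha>=\<alpha> and \<beta>="fund \<beta> y" and m=y] ys Cons.prems(2,6) by simp
      then show ?thesis by simp
    qed
  qed
qed

lemma large_list_appendE:
  assumes "large_list (\<alpha> @ \<beta>) xs"
  obtains ys zs where "xs = ys @ zs" "large_list \<beta> ys" "large_list \<alpha> zs"
  using assms
proof (induction xs arbitrary: \<beta> thesis)
  case Nil
  then show ?case
    using Nil.prems(1)[of "[]" "[]"] by simp
next
  case (Cons x xs)
  show ?case
  proof (cases "\<beta> = []")
    case True
    then show ?thesis
      using Cons.prems by (intro Cons.prems(1)[of "[]" "x # xs"]) simp_all
  next
    case False
    with Cons.prems(2) have "large_list (\<alpha> @ fund \<beta> x) xs"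
      by (simp add: fund_append)
    from Cons.IH[OF _ this] obtain ys zs
      where "xs = ys @ zs" "large_list (fund \<beta> x) ys" "large_list \<alpha> zs" by blast
    with Cons.prems(1)[of "x # ys" zs] show ?thesis by simp
  qed
qed

lemma large_list_appendI:
  assumes "sorted_wrt (<) (ys @ zs)" "large_list \<beta> ys" "large_list \<alpha> zs"
  shows "large_list (\<alpha> @ \<beta>) (ys @ zs)"
  using assms
proof (induction ys arbitrary: \<beta>)
  case (Cons y ys)
  show ?case
  proof (cases "\<beta> = []")
    case True
    have "large_list \<alpha> (y # ys @ zs)"
      using large_list_mono[of "y # ys @ zs" zs 0 \<alpha> \<alpha>] Cons.prems
      by (auto simp: sorted_wrt_append)
    with True show ?thesis by simp
  next
    case False
    with Cons show ?thesis by (simp add: fund_append sorted_wrt_append)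
  qed
qed simp

section \<open>Large sets\<close>

definition set_less :: "'a::order set \<Rightarrow> 'a set \<Rightarrow> bool" where
  "set_less A B \<longleftrightarrow> (\<forall>x\<in>A. \<forall>y\<in>B. x < y)"

lemma set_less_subset: "set_less A B \<Longrightarrow> A' \<subseteq> A \<Longrightarrow> B' \<subseteq> B \<Longrightarrow> set_less A' B'"
  unfolding set_less_def by (meson subsetD)

lemma set_less_Max_less_Min:
  "set_less A B \<Longrightarrow> finite A \<Longrightarrow> A \<noteq> {} \<Longrightarrow> finite B \<Longrightarrow> B \<noteq> {} \<Longrightarrow> Max A < Min B"
  unfolding set_less_def by (metis Max_in Min_in)

lemma list_all2_set1_bex: "list_all2 R xs ys \<Longrightarrow> x \<in> set xs \<Longrightarrow> \<exists>y\<in>set ys. R x y"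
  by (induction rule: list_all2_induct) auto

lemma Union_set_subset_if_list_all2: "list_all2 (\<subseteq>) As Bs \<Longrightarrow> \<Union>(set As) \<subseteq> \<Union>(set Bs)"
  by (induction rule: list_all2_induct) auto

lemma sorted_wrt_set_less_subsets:
  assumes "list_all2 (\<subseteq>) As Bs" "sorted_wrt set_less Bs"
  shows "sorted_wrt set_less As"
  unfolding sorted_wrt_iff_nth_less
proof (intro allI impI)
  fix i j
  assume "i < j" "j < length As"
  moreover from assms(1) have "length As = length Bs" "\<forall>k<length As. As!k \<subseteq> Bs!k"
    by (simp_all add: list_all2_conv_all_nth)
  moreover from assms(2) have "\<forall>i j. i < j \<longrightarrow> j < length Bs \<longrightarrow> set_less (Bs!i) (Bs!j)"
    by (simp add: sorted_wrt_iff_nth_less)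
  ultimately show "set_less (As!i) (As!j)"
    using set_less_subset[of "Bs!i" "Bs!j" "As!i" "As!j"] by simp
qed

lemma sorted_list_of_set_strict_sorted:
  "sorted_wrt (<) xs \<Longrightarrow> sorted_list_of_set (set xs) = (xs :: 'a::linorder list)"
  by (simp add: sorted_list_of_set.idem_if_sorted_distinct strict_sorted_iff)

lemma sorted_list_of_set_Un_set_less:
  assumes "finite A" "finite B" "set_less A B"
  shows "sorted_list_of_set (A \<union> B) = sorted_list_of_set A @ sorted_list_of_set B"
proof -
  have "sorted_wrt (<) (sorted_list_of_set A @ sorted_list_of_set B)"
    using assms by (auto simp: sorted_wrt_append set_less_def)
  with assms(1,2) show ?thesis
    by (metis set_append sorted_list_of_set.set_sorted_key_list_of_set
        sorted_list_of_set_strict_sorted)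
qed

lemma sorted_list_of_set_filter:
  assumes "finite S"
  shows "sorted_list_of_set {x\<in>S. P x} = filter P (sorted_list_of_set S)"
proof -
  have eq: "{x\<in>S. P x} = set (filter P (sorted_list_of_set S))"
    using assms by auto
  show ?thesis
    unfolding eq by (rule sorted_list_of_set_strict_sorted) (simp add: sorted_wrt_filter)
qed

lemma large_iff_large_list: "large \<alpha> S \<longleftrightarrow> finite S \<and> large_list \<alpha> (sorted_list_of_set S)"
  by (simp add: large_def large_list_def)

lemma large_finite: "large \<alpha> S \<Longrightarrow> finite S"
  by (simp add: large_def)

lemma large_nonempty: "large \<alpha> S \<Longrightarrow> \<alpha> \<noteq> [] \<Longrightarrow> S \<noteq> {}"
  by (auto simp: large_iff_large_list)

lemma large_fund_steps:
  "large \<alpha> S \<Longrightarrow> (fund_step m)\<^sup>*\<^sup>* \<alpha> \<beta> \<Longrightarrow> \<forall>s\<in>S. m \<le> s \<Longrightarrow> large \<beta> S"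
  unfolding large_iff_large_list
  using large_list_mono[of "sorted_list_of_set S" "sorted_list_of_set S" m \<alpha> \<beta>] by auto

lemma large_append_iff:
  "large (\<alpha> @ \<beta>) S \<longleftrightarrow> (\<exists>S\<^sub>1 S\<^sub>2. S = S\<^sub>1 \<union> S\<^sub>2 \<and> set_less S\<^sub>1 S\<^sub>2 \<and> large \<beta> S\<^sub>1 \<and> large \<alpha> S\<^sub>2)"
proof
  assume "large (\<alpha> @ \<beta>) S"
  then have "finite S" and list: "large_list (\<alpha> @ \<beta>) (sorted_list_of_set S)"
    by (auto simp: large_iff_large_list)
  obtain ys zs where yz: "sorted_list_of_set S = ys @ zs" "large_list \<beta> ys" "large_list \<alpha> zs"
    using large_list_appendE[OF list] .
  have sorted: "sorted_wrt (<) (ys @ zs)"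
    unfolding yz(1)[symmetric] by simp
  have "S = set ys \<union> set zs"
    using yz(1) \<open>finite S\<close> by (metis set_append sorted_list_of_set.set_sorted_key_list_of_set)
  moreover have "large \<beta> (set ys)" "large \<alpha> (set zs)"
    using sorted yz(2,3) by (simp_all add: large_iff_large_list sorted_wrt_append
        sorted_list_of_set_strict_sorted)
  moreover have "set_less (set ys) (set zs)"
    using sorted by (simp add: sorted_wrt_append set_less_def)
  ultimately show "\<exists>S\<^sub>1 S\<^sub>2. S = S\<^sub>1 \<union> S\<^sub>2 \<and> set_less S\<^sub>1 S\<^sub>2 \<and> large \<beta> S\<^sub>1 \<and> large \<alpha> S\<^sub>2"
    by blast
next
  assume "\<exists>S\<^sub>1 S\<^sub>2. S = S\<^sub>1 \<union> S\<^sub>2 \<and> set_less S\<^sub>1 S\<^sub>2 \<and> large \<beta> S\<^sub>1 \<and> large \<alpha> S\<^sub>2"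
  then obtain S\<^sub>1 S\<^sub>2 where S: "S = S\<^sub>1 \<union> S\<^sub>2" "set_less S\<^sub>1 S\<^sub>2" "large \<beta> S\<^sub>1" "large \<alpha> S\<^sub>2"
    by blast
  then have fin: "finite S\<^sub>1" "finite S\<^sub>2"
    by (simp_all add: large_finite)
  have "sorted_wrt (<) (sorted_list_of_set S\<^sub>1 @ sorted_list_of_set S\<^sub>2)"
    unfolding sorted_list_of_set_Un_set_less[OF fin S(2), symmetric] by simp
  with S fin show "large (\<alpha> @ \<beta>) S"
    by (simp add: large_iff_large_list sorted_list_of_set_Un_set_less large_list_appendI)
qed

lemma large_omega_pow_Suc_iff:
  "large [Suc k] S \<longleftrightarrow> finite S \<and> S \<noteq> {} \<and> large (replicate (Min S) k) (S - {Min S})"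
  by (cases "finite S \<and> S \<noteq> {}")
    (auto simp: large_iff_large_list sorted_list_of_set_nonempty fund_def)

lemma large_replicate_0_iff: "large (replicate j 0) S \<longleftrightarrow> finite S \<and> j \<le> card S"
proof -
  have "foldl fund (replicate j 0) xs = replicate (j - length xs) 0" for xs
  proof (induction xs arbitrary: j)
    case (Cons x xs)
    have "fund (replicate j 0) x = replicate (j - 1) 0"
      by (cases j) (simp_all flip: replicate_append_same)
    with Cons show ?case by simp
  qed simp
  then show ?thesis by (auto simp: large_def)
qed

lemma large_omega_iff: "large [1] S \<longleftrightarrow> finite S \<and> S \<noteq> {} \<and> Min S < card S"
proof (cases "finite S \<and> S \<noteq> {}")
  case True
  then have "card (S - {Min S}) = card S - 1" "0 < card S"
    by (simp_all add: card_gt_0_iff)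
  then show ?thesis
    using large_omega_pow_Suc_iff[of 0 S] by (auto simp: large_replicate_0_iff)
next
  case False
  then show ?thesis
    using large_omega_pow_Suc_iff[of 0 S] by auto
qed

lemma large_replicate_le: "large (replicate j k) S \<Longrightarrow> i \<le> j \<Longrightarrow> large (replicate i k) S"
  using large_fund_steps[of "replicate j k" S 0 "replicate i k"]
    fund_steps_drop_copies[of 0 "[]" i "j - i" k]
  by simp

lemma large_omega_pow_le:
  assumes "large [j] S" "i \<le> j" "0 \<notin> S"
  shows "large [i] S"
proof -
  have "(fund_step 1)\<^sup>*\<^sup>* [j] [i]"
    using assms(2)
  proof (induction j)
    case (Suc j)
    have "fund_step 1 [Suc j] [j]"
      unfolding fund_step_def by (intro exI[of _ 1]) (simp add: fund_def)
    with Suc show ?case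
      by (cases "i = Suc j") (auto intro: converse_rtranclp_into_rtranclp)
  qed simp
  moreover have "\<forall>s\<in>S. 1 \<le> s"
    using assms(3) by (auto simp: Suc_le_eq intro!: gr0I)
  ultimately show ?thesis
    using large_fund_steps assms(1) by blast
qed

lemma large_omega_pow_Suc_split:
  assumes "large [Suc k] S" "2 \<le> Min S"
  obtains S\<^sub>1 S\<^sub>2 where "S\<^sub>1 \<union> S\<^sub>2 \<subseteq> S" "set_less S\<^sub>1 S\<^sub>2" "large [k] S\<^sub>1" "large [k] S\<^sub>2"
proof -
  have "large (replicate (Min S) k) (S - {Min S})"
    using assms(1) by (simp add: large_omega_pow_Suc_iff)
  then have "large ([k] @ [k]) (S - {Min S})"
    using large_replicate_le[OF _ assms(2)] by (simp add: numeral_2_eq_2)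
  then obtain S\<^sub>1 S\<^sub>2 where "S - {Min S} = S\<^sub>1 \<union> S\<^sub>2" "set_less S\<^sub>1 S\<^sub>2" "large [k] S\<^sub>1" "large [k] S\<^sub>2"
    unfolding large_append_iff by blast
  then show thesis
    by (intro that[of S\<^sub>1 S\<^sub>2]) auto
qed

lemma large_replicate_blocks:
  assumes "large (replicate M k) S"
  shows "\<exists>Ds. length Ds = M \<and> (\<forall>D\<in>set Ds. D \<subseteq> S \<and> large [k] D) \<and> sorted_wrt set_less Ds"
  using assms
proof (induction M arbitrary: S)
  case (Suc M)
  then have "large (replicate M k @ [k]) S"
    by (simp add: replicate_append_same)
  then obtain S\<^sub>1 S\<^sub>2 where S: "S = S\<^sub>1 \<union> S\<^sub>2" "set_less S\<^sub>1 S\<^sub>2" "large [k] S\<^sub>1"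
      "large (replicate M k) S\<^sub>2"
    by (auto simp: large_append_iff)
  from Suc.IH[OF S(4)] obtain Ds where Ds:
    "length Ds = M" "\<forall>D\<in>set Ds. D \<subseteq> S\<^sub>2 \<and> large [k] D" "sorted_wrt set_less Ds"
    by blast
  moreover have "\<forall>D\<in>set Ds. set_less S\<^sub>1 D"
    using S(2) Ds by (auto simp: set_less_def)
  ultimately show ?case
    using S by (intro exI[of _ "S\<^sub>1 # Ds"]) auto
qed simp

lemma large_omega_Max_blocks:
  assumes "Fs \<noteq> []" "\<forall>F\<in>set Fs. finite F \<and> F \<noteq> {}" "sorted_wrt set_less Fs"
    and "Max (hd Fs) < length Fs"
  shows "large [1] {Max (Fs!i) |i. i < length Fs}"
proof -
  have "Max A < Max B" if "set_less A B" "A \<in> set Fs" "B \<in> set Fs" for A B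
  proof -
    have "Max A < Min B"
      by (rule set_less_Max_less_Min[OF that(1)]) (use that(2,3) assms(2) in auto)
    moreover have "Min B \<le> Max B"
      using that(3) assms(2) by simp
    ultimately show ?thesis
      by simp
  qed
  then have sorted: "sorted_wrt (<) (map Max Fs)"
    unfolding sorted_wrt_map by (rule sorted_wrt_mono_rel[OF _ assms(3)])
  have V: "{Max (Fs!i) |i. i < length Fs} = set (map Max Fs)"
    unfolding set_map set_conv_nth[of Fs] by blast
  have "card (set (map Max Fs)) = length Fs"
    using sorted distinct_card[of "map Max Fs"] by (simp add: strict_sorted_iff)
  moreover have "Min (set (map Max Fs)) = Max (hd Fs)"
    using assms(1) sorted by (cases Fs) (auto intro!: Min_eqI simp: less_imp_le)
  ultimately show ?thesis
    unfolding V large_omega_iff using assms(1,4) by simp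
qed

section \<open>Partitions of large sets\<close>

definition dominates :: "nat \<Rightarrow> cnf \<Rightarrow> cnf \<Rightarrow> bool" where
  "dominates m \<alpha> \<beta> \<longleftrightarrow>
     (\<forall>xs. sorted_wrt (<) xs \<longrightarrow> (\<forall>x\<in>set xs. m \<le> x) \<longrightarrow> large_list \<alpha> xs \<longrightarrow> large_list \<beta> xs)"

lemma dominates_refl: "dominates m \<alpha> \<alpha>"
  by (simp add: dominates_def)

lemma dominates_trans [trans]: "dominates m \<alpha> \<beta> \<Longrightarrow> dominates m \<beta> \<gamma> \<Longrightarrow> dominates m \<alpha> \<gamma>"
  by (simp add: dominates_def)

lemma dominates_zero: "dominates m \<alpha> []"
  by (simp add: dominates_def)

lemma dominates_if_fund_steps: "(fund_step m)\<^sup>*\<^sup>* \<alpha> \<beta> \<Longrightarrow> dominates m \<alpha> \<beta>"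
  unfolding dominates_def using large_list_mono by blast

lemma dominates_append:
  assumes "dominates m \<alpha> \<beta>" "dominates m \<gamma> \<delta>"
  shows "dominates m (\<alpha> @ \<gamma>) (\<beta> @ \<delta>)"
  unfolding dominates_def
proof (intro allI impI)
  fix xs
  assume xs: "sorted_wrt (<) xs" "\<forall>x\<in>set xs. m \<le> x" "large_list (\<alpha> @ \<gamma>) xs"
  then obtain ys zs where yz: "xs = ys @ zs" "large_list \<gamma> ys" "large_list \<alpha> zs"
    by (blast elim: large_list_appendE)
  with xs(1,2) assms have "large_list \<delta> ys" "large_list \<beta> zs"
    by (simp_all add: dominates_def sorted_wrt_append)
  with xs(1) yz(1) show "large_list (\<beta> @ \<delta>) xs"
    by (simp add: large_list_appendI)
qed

definition cnf_of_mset :: "nat multiset \<Rightarrow> cnf" where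
  "cnf_of_mset M = rev (sorted_list_of_multiset M)"

lemma mset_cnf_of_mset [simp]: "mset (cnf_of_mset M) = M"
  by (simp add: cnf_of_mset_def)

lemma set_cnf_of_mset [simp]: "set (cnf_of_mset M) = set_mset M"
  by (metis mset_cnf_of_mset set_mset_mset)

lemma sorted_rev_cnf_of_mset: "sorted (rev (cnf_of_mset M))"
  by (simp add: cnf_of_mset_def)

lemma cnf_of_mset_eqI:
  assumes "sorted (rev xs)" "mset xs = M"
  shows "cnf_of_mset M = xs"
proof -
  have "sort xs = rev xs"
    using assms(1) by (intro properties_for_sort) simp_all
  with assms(2) show ?thesis
    by (auto simp: cnf_of_mset_def)
qed

lemma cnf_of_mset_eq_Nil_iff [simp]: "cnf_of_mset M = [] \<longleftrightarrow> M = {#}"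
  by (metis mset_cnf_of_mset mset_zero_iff_right)

lemma cnf_of_mset_replicate_mset: "cnf_of_mset (replicate_mset j k) = replicate j k"
  by (rule cnf_of_mset_eqI) auto

lemma cnf_of_mset_empty [simp]: "cnf_of_mset {#} = []"
  by simp

lemma cnf_of_mset_single [simp]: "cnf_of_mset {#e#} = [e]"
  by (rule cnf_of_mset_eqI) simp_all

lemma cnf_of_mset_add_split:
  assumes "\<forall>u\<in>#M. \<forall>v\<in>#N. (e \<le> u \<longrightarrow> v \<le> u) \<and> (u < e \<longrightarrow> u \<le> v)"
  shows "cnf_of_mset (M + N) = cnf_of_mset (filter_mset (\<lambda>u. e \<le> u) M) @ cnf_of_mset N @
    cnf_of_mset (filter_mset (\<lambda>u. u < e) M)"
    (is "_ = ?hi @ ?mid @ ?lo")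
proof (rule cnf_of_mset_eqI)
  have "filter_mset (\<lambda>u. e \<le> u) M + filter_mset (\<lambda>u. u < e) M = M"
    by (induction M) auto
  then show "mset (?hi @ ?mid @ ?lo) = M + N"
    by (simp add: ac_simps)
  have "sorted (rev ?lo @ rev ?mid @ rev ?hi)"
    unfolding sorted_append using assms sorted_rev_cnf_of_mset by auto
  then show "sorted (rev (?hi @ ?mid @ ?lo))"
    by simp
qed

lemma dominates_mset_remove: "dominates m (cnf_of_mset (M + {#e#})) (cnf_of_mset M)"
proof -
  let ?hi = "cnf_of_mset (filter_mset (\<lambda>u. e \<le> u) M)" and ?lo = "cnf_of_mset (filter_mset (\<lambda>u. u < e) M)"
  have "dominates m (?hi @ [e] @ ?lo) (?hi @ [] @ ?lo)"
    by (intro dominates_append dominates_refl dominates_zero)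
  then show ?thesis
    using cnf_of_mset_add_split[of M "{#e#}" e] cnf_of_mset_add_split[of M "{#}" e] by simp
qed

lemma dominates_mset_expand:
  assumes "0 < e" "y \<le> m"
  shows "dominates m (cnf_of_mset (M + {#e#})) (cnf_of_mset (M + replicate_mset y (e - 1)))"
proof -
  let ?hi = "cnf_of_mset (filter_mset (\<lambda>u. e \<le> u) M)" and ?lo = "cnf_of_mset (filter_mset (\<lambda>u. u < e) M)"
  have "dominates m [e] (replicate y (e - 1))"
    using dominates_if_fund_steps[OF fund_step_fund[OF assms(2)], of "[e]"]
      fund_omega_pow[OF assms(1), of "[]" y]
    by simp
  then have "dominates m (?hi @ [e] @ ?lo) (?hi @ replicate y (e - 1) @ ?lo)"
    by (intro dominates_append dominates_refl)
  moreover have "\<forall>u\<in>#M. \<forall>v\<in>#replicate_mset y (e - 1). (e \<le> u \<longrightarrow> v \<le> u) \<and> (u < e \<longrightarrow> u \<le> v)"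
    by auto
  ultimately show ?thesis
    using cnf_of_mset_add_split[of M "{#e#}" e]
    by (simp add: cnf_of_mset_add_split cnf_of_mset_replicate_mset)
qed

lemma dominates_mset_add: "dominates m (cnf_of_mset (M + N)) (cnf_of_mset M)"
proof (induction N)
  case (add x N)
  then show ?case
    using dominates_mset_remove[of m "M + N" x] dominates_trans by auto
qed (simp add: dominates_refl)

lemma dominates_mset_lower:
  assumes "u \<le> v" "0 < m"
  shows "dominates m (cnf_of_mset (M + {#v#})) (cnf_of_mset (M + {#u#}))"
  using assms(1)
proof (induction v)
  case (Suc v)
  show ?case
  proof (cases "u = Suc v")
    case False
    with Suc have "dominates m (cnf_of_mset (M + {#v#})) (cnf_of_mset (M + {#u#}))"
      by simp
    moreover have "dominates m (cnf_of_mset (M + {#Suc v#})) (cnf_of_mset (M + {#v#}))"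
      using dominates_mset_expand[of "Suc v" 1 m M] assms(2) by simp
    ultimately show ?thesis
      using dominates_trans by blast
  qed (simp add: dominates_refl)
qed (simp add: dominates_refl)

definition mset_fund :: "nat multiset \<Rightarrow> nat \<Rightarrow> nat multiset" where
  "mset_fund A x = (if A = {#} then {#} else
     A - {#Min_mset A#} + (case Min_mset A of 0 \<Rightarrow> {#} | Suc k \<Rightarrow> replicate_mset x k))"

lemma fund_cnf_of_mset: "fund (cnf_of_mset A) x = cnf_of_mset (mset_fund A x)"
proof (cases "A = {#}")
  case False
  define e where "e = Min_mset A"
  have "e \<in># A"
    using False by (simp add: e_def)
  have ge: "\<forall>v\<in>#A - {#e#}. e \<le> v"
    by (auto simp: e_def dest: in_diffD)
  have A: "cnf_of_mset A = cnf_of_mset (A - {#e#}) @ [e]"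
    using ge sorted_rev_cnf_of_mset[of "A - {#e#}"] \<open>e \<in># A\<close>
    by (intro cnf_of_mset_eqI) (auto simp: sorted_append)
  show ?thesis
  proof (cases e)
    case 0
    with A False show ?thesis by (simp add: mset_fund_def e_def[symmetric])
  next
    case (Suc k)
    have "cnf_of_mset (A - {#e#} + replicate_mset x k) = cnf_of_mset (A - {#e#}) @ replicate x k"
      using ge sorted_rev_cnf_of_mset[of "A - {#e#}"] Suc
      by (intro cnf_of_mset_eqI) (auto simp: sorted_append)
    with A False Suc show ?thesis by (simp add: mset_fund_def e_def[symmetric])
  qed
qed (simp add: mset_fund_def)

lemma mset_fund_add:
  assumes "A \<noteq> {#}" "\<forall>v\<in>#B. Min_mset A \<le> v"
  shows "mset_fund (A + B) x = mset_fund A x + B"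
proof -
  define e where "e = Min_mset A"
  have "e \<in># A"
    using assms(1) by (simp add: e_def)
  have "Min_mset (A + B) = e"
    using assms(2) \<open>e \<in># A\<close> by (intro Min_eqI) (auto simp: e_def)
  moreover have "A + B - {#e#} = A - {#e#} + B"
    using \<open>e \<in># A\<close> by (simp add: diff_union_single_conv)
  ultimately show ?thesis
    using assms(1) by (cases e) (auto simp: mset_fund_def e_def[symmetric] ac_simps)
qed

text \<open>If the least exponent of \<open>B\<close> is below that of \<open>A\<close>, a step taken in \<open>B\<close> leaves
  at least as much as the same step taken in \<open>A\<close>: drop what the step produced in \<open>B\<close>, expand
  the least term \<open>\<omega>\<^sup>e\<close> of \<open>A\<close> into \<open>x + 1 \<le> m\<close> copies of \<open>\<omega>\<^sup>e\<^sup>-\<^sup>1\<close>, and lower one of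
  them to the least term of \<open>B\<close>.\<close>

lemma dominates_mset_fund_swap:
  assumes "A \<noteq> {#}" "B \<noteq> {#}" "Min_mset B < Min_mset A" "x < m"
  shows "dominates m (cnf_of_mset (A + mset_fund B x)) (cnf_of_mset (mset_fund A x + B))"
proof -
  define e where "e = Min_mset A"
  define f where "f = Min_mset B"
  obtain k where k: "e = Suc k"
    using assms(3) by (cases e) (auto simp: e_def f_def)
  define A' where "A' = A - {#e#}"
  define B' where "B' = B - {#f#}"
  have A: "A = A' + {#e#}"
    using assms(1) by (simp add: A'_def e_def)
  have B: "B = B' + {#f#}"
    using assms(2) by (simp add: B'_def f_def)
  define tail where "tail = (case f of 0 \<Rightarrow> {#} | Suc j \<Rightarrow> replicate_mset x j)"
  have fund_B: "mset_fund B x = B' + tail"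
    using assms(2) by (cases f) (auto simp: mset_fund_def f_def[symmetric] B'_def tail_def)
  have fund_A: "mset_fund A x = A' + replicate_mset x k"
    using assms(1) k by (auto simp: mset_fund_def e_def[symmetric] A'_def)
  have "dominates m (cnf_of_mset (A + mset_fund B x)) (cnf_of_mset (A' + B' + {#e#}))"
    using dominates_mset_add[of m "A' + B' + {#e#}" tail] A fund_B by (simp add: ac_simps)
  also have "dominates m \<dots> (cnf_of_mset (A' + B' + replicate_mset x k + {#k#}))"
    using dominates_mset_expand[of e "Suc x" m "A' + B'"] k assms(4) by (simp add: ac_simps)
  also have "dominates m \<dots> (cnf_of_mset (A' + B' + replicate_mset x k + {#f#}))"
    using dominates_mset_lower[of f k m] assms(3,4) k by (simp add: e_def f_def)
  also have "A' + B' + replicate_mset x k + {#f#} = mset_fund A x + B"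
    using fund_A B by (simp add: ac_simps)
  finally show ?thesis .
qed

lemma dominates_mset_fund_add:
  assumes "A \<noteq> {#}" "B \<noteq> {#}" "x < m"
  shows "dominates m (cnf_of_mset (mset_fund (A + B) x)) (cnf_of_mset (mset_fund A x + B))"
proof (cases "Min_mset A \<le> Min_mset B")
  case True
  then have "mset_fund (A + B) x = mset_fund A x + B"
    using assms(1) by (intro mset_fund_add) (auto intro: order_trans)
  then show ?thesis by (simp add: dominates_refl)
next
  case False
  have "\<forall>v\<in>#A. Min_mset B \<le> v"
    using False by (metis Min_le finite_set_mset le_trans nle_le)
  then have "mset_fund (B + A) x = mset_fund B x + A"
    using assms(2) by (intro mset_fund_add)
  then show ?thesis
    using dominates_mset_fund_swap[OF assms(1,2) _ assms(3)] False by (simp add: ac_simps)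
qed

text \<open>\<open>cnf_of_mset (A + B)\<close> is the natural sum of the ordinals of \<open>A\<close> and \<open>B\<close>. Colour each
  element of an \<open>(A + B)\<close>-large list and charge it to \<open>A\<close> or \<open>B\<close> accordingly; by
  \<open>dominates_mset_fund_add\<close> the remaining list stays large for the remaining natural sum.\<close>

lemma large_list_mset_partition:
  assumes "sorted_wrt (<) xs" "large_list (cnf_of_mset (A + B)) xs"
  shows "large_list (cnf_of_mset A) (filter T xs) \<or>
    large_list (cnf_of_mset B) (filter (\<lambda>x. \<not> T x) xs)"
  using assms
proof (induction xs arbitrary: A B)
  case (Cons x xs)
  have xs: "sorted_wrt (<) xs" "\<forall>u\<in>set xs. Suc x \<le> u"
    using Cons.prems(1) by (auto simp: Suc_le_eq)
  have rest: "large_list (cnf_of_mset (mset_fund (A + B) x)) xs"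
    using Cons.prems(2) by (simp add: fund_cnf_of_mset)
  show ?case
  proof (cases "A = {#} \<or> B = {#}")
    case False
    show ?thesis
    proof (cases "T x")
      case True
      have "dominates (Suc x) (cnf_of_mset (mset_fund (A + B) x)) (cnf_of_mset (mset_fund A x + B))"
        using False by (intro dominates_mset_fund_add) auto
      with rest xs have "large_list (cnf_of_mset (mset_fund A x + B)) xs"
        by (simp add: dominates_def)
      from Cons.IH[OF xs(1) this] True show ?thesis
        by (simp add: fund_cnf_of_mset)
    next
      case False
      have "dominates (Suc x) (cnf_of_mset (mset_fund (B + A) x)) (cnf_of_mset (mset_fund B x + A))"
        using \<open>\<not> (A = {#} \<or> B = {#})\<close> by (intro dominates_mset_fund_add) auto
      with rest xs have "large_list (cnf_of_mset (A + mset_fund B x)) xs"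
        by (simp add: dominates_def ac_simps)
      from Cons.IH[OF xs(1) this] False show ?thesis
        by (simp add: fund_cnf_of_mset)
    qed
  qed auto
qed simp

lemma large_replicate_partition:
  assumes "large (replicate (a + b) k) S"
  shows "large (replicate a k) {x\<in>S. P x} \<or> large (replicate b k) {x\<in>S. \<not> P x}"
proof -
  have "finite S"
    using assms by (rule large_finite)
  let ?A = "replicate_mset a k" and ?B = "replicate_mset b k"
  have "cnf_of_mset (?A + ?B) = replicate (a + b) k"
    by (rule cnf_of_mset_eqI) (auto simp: multiset_eq_iff)
  with assms have "large_list (cnf_of_mset (?A + ?B)) (sorted_list_of_set S)"
    by (simp add: large_iff_large_list)
  from large_list_mset_partition[OF _ this, of P] show ?thesis
    using \<open>finite S\<close>
    by (simp add: large_iff_large_list cnf_of_mset_replicate_mset sorted_list_of_set_filter)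
qed

lemma large_replicate_pigeonhole:
  assumes "finite C" "C \<noteq> {}" "f ` S \<subseteq> C" "large (replicate (card C * M) k) S"
  shows "\<exists>c\<in>C. large (replicate M k) {s\<in>S. f s = c}"
  using assms
proof (induction C arbitrary: S rule: finite_ne_induct)
  case (singleton c)
  then have "{s\<in>S. f s = c} = S" by auto
  with singleton show ?case by simp
next
  case (insert c C)
  then have "large (replicate (M + card C * M) k) S"
    by simp
  from large_replicate_partition[OF this, of "\<lambda>s. f s = c"]
  show ?case
  proof
    assume "large (replicate (card C * M) k) {s\<in>S. f s \<noteq> c}"
    moreover have "f ` {s\<in>S. f s \<noteq> c} \<subseteq> C"
      using insert.prems by auto
    ultimately obtain c' where "c' \<in> C" "large (replicate M k) {s\<in>{s\<in>S. f s \<noteq> c}. f s = c'}"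
      using insert.IH by blast
    moreover have "{s\<in>{s\<in>S. f s \<noteq> c}. f s = c'} = {s\<in>S. f s = c'}"
      using \<open>c' \<in> C\<close> insert.hyps by auto
    ultimately show ?thesis by auto
  qed auto
qed

section \<open>Homogeneous blocks\<close>

definition homogeneous :: "('a \<Rightarrow> 'b \<Rightarrow> bool) \<Rightarrow> 'a set \<Rightarrow> 'b set \<Rightarrow> bool" where
  "homogeneous P A B \<longleftrightarrow> (\<exists>c. \<forall>x\<in>A. \<forall>y\<in>B. P x y = c)"

lemma homogeneous_subset:
  assumes "homogeneous P A B" "A' \<subseteq> A" "B' \<subseteq> B"
  shows "homogeneous P A' B'"
proof -
  from assms(1) obtain c where "\<forall>x\<in>A. \<forall>y\<in>B. P x y = c"
    unfolding homogeneous_def ..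
  with assms(2,3) show ?thesis
    unfolding homogeneous_def by (intro exI[of _ c]) fast
qed

text \<open>Colour \<open>y \<in> S\<close> by the set of \<open>x \<in> H\<close> with \<open>P x y\<close>: one of the \<open>2\<^bsup>|H|\<^esup>\<close> colour
  classes is large, and on it \<open>P x y\<close> only depends on whether \<open>x\<close> lies in that colour.\<close>

lemma large_homogeneous_rectangle:
  assumes "large (replicate 2 n) H" "large (replicate (2 ^ card H * M) k) S"
  obtains G Q where "G \<subseteq> H" "large [n] G" "Q \<subseteq> S" "large (replicate M k) Q" "homogeneous P G Q"
proof -
  define f where "f y = {x\<in>H. P x y}" for y
  have "finite H"
    using assms(1) by (rule large_finite)
  have "f ` S \<subseteq> Pow H"
    by (auto simp: f_def)
  moreover have "large (replicate (card (Pow H) * M) k) S"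
    using assms(2) \<open>finite H\<close> by (simp add: card_Pow)
  ultimately obtain p where Q: "large (replicate M k) {y\<in>S. f y = p}"
    using large_replicate_pigeonhole[of "Pow H" f S M k] \<open>finite H\<close> by auto
  have "large (replicate (1 + 1) n) H"
    using assms(1) by (simp add: numeral_2_eq_2)
  then have "large [n] {x\<in>H. x \<in> p} \<or> large [n] {x\<in>H. x \<notin> p}"
    using large_replicate_partition[of 1 1 n H "\<lambda>x. x \<in> p"] by simp
  then obtain b where G: "large [n] {x\<in>H. (x \<in> p) = b}"
  proof
    assume "large [n] {x\<in>H. x \<in> p}"
    then show thesis
      using that[of True] by simp
  next
    assume "large [n] {x\<in>H. x \<notin> p}"
    then show thesis
      using that[of False] by simp
  qed
  have "P x y = b" if "x \<in> {x\<in>H. (x \<in> p) = b}" "y \<in> {y\<in>S. f y = p}" for x y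
  proof -
    have "x \<in> f y \<longleftrightarrow> P x y"
      using that(1) by (simp add: f_def)
    with that show ?thesis
      by simp
  qed
  then have "homogeneous P {x\<in>H. (x \<in> p) = b} {y\<in>S. f y = p}"
    unfolding homogeneous_def by (intro exI[of _ b]) fast
  with G Q show thesis
    by (intro that) auto
qed

lemma large_blocks_refine:
  assumes "finite E" "\<forall>j<length Es. large (replicate (2 ^ card E * w j) k) (Es!j)"
  obtains Es' p where "length Es' = length Es"
    "\<forall>j<length Es. Es'!j \<subseteq> Es!j \<and> large (replicate (w j) k) (Es'!j)"
    "\<forall>j<length Es. \<forall>x\<in>E. \<forall>y\<in>Es'!j. P x y \<longleftrightarrow> x \<in> p j"
proof -
  define g where "g y = {x\<in>E. P x y}" for y
  have "\<forall>j\<in>{..<length Es}. \<exists>p. large (replicate (w j) k) {y\<in>Es!j. g y = p}"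
  proof
    fix j
    assume "j \<in> {..<length Es}"
    with assms have "large (replicate (card (Pow E) * w j) k) (Es!j)"
      by (simp add: card_Pow)
    moreover have "g ` (Es!j) \<subseteq> Pow E"
      by (auto simp: g_def)
    ultimately have "\<exists>c\<in>Pow E. large (replicate (w j) k) {y\<in>Es!j. g y = c}"
      using assms(1) by (intro large_replicate_pigeonhole) auto
    then show "\<exists>p. large (replicate (w j) k) {y\<in>Es!j. g y = p}"
      by blast
  qed
  from bchoice[OF this] obtain p
    where p: "\<forall>j\<in>{..<length Es}. large (replicate (w j) k) {y\<in>Es!j. g y = p j}"
    by blast
  define Es' where "Es' = map (\<lambda>j. {y\<in>Es!j. g y = p j}) [0..<length Es]"
  have "P x y \<longleftrightarrow> x \<in> p j" if "j < length Es" "x \<in> E" "y \<in> Es'!j" for j x y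
  proof -
    have "g y = p j"
      using that(1,3) by (simp add: Es'_def)
    moreover have "x \<in> g y \<longleftrightarrow> P x y"
      using that(2) by (simp add: g_def)
    ultimately show ?thesis
      by simp
  qed
  moreover have "Es'!j \<subseteq> Es!j \<and> large (replicate (w j) k) (Es'!j)" if "j < length Es" for j
    using p that by (auto simp: Es'_def)
  ultimately show thesis
    by (intro that[of Es' p]) (simp_all add: Es'_def)
qed

text \<open>Colour each \<open>x \<in> E\<close> by the set of indices \<open>j\<close> with \<open>x \<in> p j\<close>: as there are at most
  \<open>min E\<close> colours, one colour class of \<open>E - {min E}\<close> is still \<open>\<omega>\<^sup>n\<close>-large.\<close>

lemma large_homogeneous_head:
  assumes "large [Suc n] E" "2 ^ length Fs \<le> Min E"
    and "\<forall>j<length Fs. \<forall>x\<in>E. \<forall>y\<in>Fs!j. P x y \<longleftrightarrow> x \<in> p j"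
  obtains G where "G \<subseteq> E" "large [n] G" "\<forall>F\<in>set Fs. homogeneous P G F"
proof -
  define v where "v x = {j\<in>{..<length Fs}. x \<in> p j}" for x
  have "large (replicate (Min E) n) (E - {Min E})"
    using assms(1) by (simp add: large_omega_pow_Suc_iff)
  moreover have "card (Pow {..<length Fs}) * 1 \<le> Min E"
    using assms(2) by (simp add: card_Pow)
  ultimately have "large (replicate (card (Pow {..<length Fs}) * 1) n) (E - {Min E})"
    by (rule large_replicate_le)
  then obtain w where w: "large [n] {x\<in>E - {Min E}. v x = w}"
    using large_replicate_pigeonhole[of "Pow {..<length Fs}" v "E - {Min E}" 1 n]
    by (auto simp: v_def)
  have "homogeneous P {x\<in>E - {Min E}. v x = w} (Fs!j)" if "j < length Fs" for j
    unfolding homogeneous_def using assms(3) that by (intro exI[of _ "j \<in> w"]) (auto simp: v_def)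
  then have "\<forall>F\<in>set Fs. homogeneous P {x\<in>E - {Min E}. v x = w} F"
    by (auto simp: in_set_conv_nth)
  with w show thesis
    by (intro that[of "{x\<in>E - {Min E}. v x = w}"]) auto
qed

lemma large_block_weights_subsets:
  assumes "list_all2 (\<subseteq>) As Bs" "\<forall>B\<in>set Bs. finite B"
    and "\<forall>j<length Bs. large (replicate (2 ^ card (\<Union>i<j. Bs!i)) k) (As!j)"
  shows "\<forall>j<length As. large (replicate (2 ^ card (\<Union>i<j. As!i)) k) (As!j)"
proof (intro allI impI)
  fix j
  assume "j < length As"
  have "length As = length Bs"
    using assms(1) by (rule list_all2_lengthD)
  have "As!i \<subseteq> Bs!i" if "i < j" for i
    using list_all2_nthD[OF assms(1)] that \<open>j < length As\<close> by simp
  then have "(\<Union>i<j. As!i) \<subseteq> (\<Union>i<j. Bs!i)"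
    by blast
  moreover have "finite (\<Union>i<j. Bs!i)"
    using assms(2) \<open>j < length As\<close> \<open>length As = length Bs\<close> by simp
  ultimately have "(2::nat) ^ card (\<Union>i<j. As!i) \<le> 2 ^ card (\<Union>i<j. Bs!i)"
    by (intro power_increasing card_mono) simp_all
  moreover have "large (replicate (2 ^ card (\<Union>i<j. Bs!i)) k) (As!j)"
    using assms(3) \<open>j < length As\<close> \<open>length As = length Bs\<close> by simp
  ultimately show "large (replicate (2 ^ card (\<Union>i<j. As!i)) k) (As!j)"
    by (rule large_replicate_le[rotated])
qed

lemma large_block_weights_Cons:
  assumes "sorted_wrt set_less (E # Es)"
    and "\<forall>j<length (E # Es). large (replicate (2 ^ card (\<Union>i<j. (E # Es)!i)) k) ((E # Es)!j)"
  shows "\<forall>j<length Es. large (replicate (2 ^ card E * 2 ^ card (\<Union>i<j. Es!i)) k) (Es!j)"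
proof (intro allI impI)
  fix j
  assume "j < length Es"
  have fin: "finite ((E # Es)!i)" if "i < length (E # Es)" for i
    using assms(2) that by (auto intro: large_finite)
  have "(\<Union>i<Suc j. (E # Es)!i) = E \<union> (\<Union>i<j. Es!i)"
    by (simp add: lessThan_Suc_eq_insert_0)
  moreover have "E \<inter> (\<Union>i<j. Es!i) = {}"
    using assms(1) \<open>j < length Es\<close> by (fastforce simp: set_less_def)
  moreover have "finite E" "finite (\<Union>i<j. Es!i)"
    using fin[of 0] fin[of "Suc _"] \<open>j < length Es\<close> by auto
  ultimately have "card (\<Union>i<Suc j. (E # Es)!i) = card E + card (\<Union>i<j. Es!i)"
    by (simp add: card_Un_disjoint)
  with assms(2) \<open>j < length Es\<close>
  show "large (replicate (2 ^ card E * 2 ^ card (\<Union>i<j. Es!i)) k) (Es!j)"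
    by (auto simp: power_add dest!: spec[of _ "Suc j"])
qed

definition weighted_blocks :: "nat \<Rightarrow> nat set list \<Rightarrow> bool" where
  "weighted_blocks k Es \<longleftrightarrow> sorted_wrt set_less Es \<and> (\<forall>x\<in>\<Union>(set Es). 2 ^ length Es \<le> x) \<and>
     (\<forall>j<length Es. large (replicate (2 ^ card (\<Union>i<j. Es!i)) k) (Es!j))"

lemma weighted_blocks_refine:
  assumes "weighted_blocks k (E # Es)" "list_all2 (\<subseteq>) Es' Es"
    and "\<forall>j<length Es. large (replicate (2 ^ card (\<Union>i<j. Es!i)) k) (Es'!j)"
  shows "weighted_blocks k Es'"
  unfolding weighted_blocks_def
proof (intro conjI)
  have "length Es' = length Es"
    using assms(2) by (rule list_all2_lengthD)
  show "sorted_wrt set_less Es'"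
    using assms(1) by (simp add: weighted_blocks_def sorted_wrt_set_less_subsets[OF assms(2)])
  show "\<forall>x\<in>\<Union>(set Es'). 2 ^ length Es' \<le> x"
  proof
    fix x
    assume "x \<in> \<Union>(set Es')"
    with Union_set_subset_if_list_all2[OF assms(2)] have "x \<in> \<Union>(set (E # Es))"
      by auto
    with assms(1) have "2 ^ length (E # Es) \<le> x"
      by (simp add: weighted_blocks_def)
    moreover have "(2::nat) ^ length Es' \<le> 2 ^ length (E # Es)"
      using \<open>length Es' = length Es\<close> by simp
    ultimately show "2 ^ length Es' \<le> x"
      by linarith
  qed
  have "finite B" if "B \<in> set Es" for B
  proof -
    from that obtain i where "i < length Es" "B = Es!i"
      by (auto simp: in_set_conv_nth)
    with assms(1) show ?thesis
      by (auto simp: weighted_blocks_def dest!: spec[of _ "Suc i"] intro: large_finite)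
  qed
  with assms(2,3) \<open>length Es' = length Es\<close>
  show "\<forall>j<length Es'. large (replicate (2 ^ card (\<Union>i<j. Es'!i)) k) (Es'!j)"
    by (intro large_block_weights_subsets) auto
qed

text \<open>The first block \<open>E\<close> is handled by \<open>large_homogeneous_head\<close>, after the later blocks have
  been refined so that the colour seen from each \<open>x \<in> E\<close> is fixed on each of them;
  the weight \<open>2\<^bsup>|E\<^sub>0 \<union> \<dots> \<union> E\<^sub>j\<^sub>-\<^sub>1|\<^esup>\<close> of block \<open>j\<close> pays for all these refinements.\<close>

lemma homogeneous_subblocks:
  assumes "weighted_blocks (Suc n) Es"
  shows "\<exists>Gs. list_all2 (\<lambda>G E. G \<subseteq> E \<and> large [n] G) Gs Es \<and> sorted_wrt (homogeneous P) Gs"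
  using assms
proof (induction "length Es" arbitrary: Es)
  case (Suc r)
  then obtain E Es\<^sub>0 where Es: "Es = E # Es\<^sub>0"
    by (cases Es) auto
  note blocks = Suc.prems[unfolded Es]
  then have E: "large [Suc n] E" "2 ^ length (E # Es\<^sub>0) \<le> Min E"
    by (auto simp: weighted_blocks_def large_omega_pow_Suc_iff dest: spec[of _ 0])
  obtain Es' p where Es': "length Es' = length Es\<^sub>0"
      "\<forall>j<length Es\<^sub>0. Es'!j \<subseteq> Es\<^sub>0!j \<and> large (replicate (2 ^ card (\<Union>i<j. Es\<^sub>0!i)) (Suc n)) (Es'!j)"
      "\<forall>j<length Es\<^sub>0. \<forall>x\<in>E. \<forall>y\<in>Es'!j. P x y \<longleftrightarrow> x \<in> p j"
    using large_blocks_refine[OF large_finite[OF E(1)] large_block_weights_Cons] blocks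
    unfolding weighted_blocks_def by blast
  have sub: "list_all2 (\<subseteq>) Es' Es\<^sub>0"
    using Es'(1,2) by (intro list_all2_all_nthI) simp_all
  have "r = length Es'"
    using Suc.hyps(2) Es Es'(1) by simp
  moreover have "weighted_blocks (Suc n) Es'"
    using Es'(2) by (intro weighted_blocks_refine[OF blocks sub]) simp
  ultimately obtain Gs where Gs: "list_all2 (\<lambda>G E. G \<subseteq> E \<and> large [n] G) Gs Es'"
      "sorted_wrt (homogeneous P) Gs"
    using Suc.hyps(1) by blast
  have "(2::nat) ^ length Es' \<le> 2 ^ length (E # Es\<^sub>0)"
    using Es'(1) by simp
  with E(2) have "2 ^ length Es' \<le> Min E"
    by linarith
  then obtain G where G: "G \<subseteq> E" "large [n] G" "\<forall>F\<in>set Es'. homogeneous P G F"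
    by (rule large_homogeneous_head[OF E(1) _ Es'(3)[folded Es'(1)]])
  have "\<forall>G'\<in>set Gs. homogeneous P G G'"
    using G(3) list_all2_set1_bex[OF Gs(1)] homogeneous_subset by blast
  moreover have "list_all2 (\<lambda>G E. G \<subseteq> E \<and> large [n] G) Gs Es\<^sub>0"
    by (rule list_all2_trans[OF _ Gs(1) sub]) auto
  ultimately show ?case
    using G Gs(2) Es by (intro exI[of _ "G # Gs"]) simp
qed simp

lemma grouping_if_homogeneous_blocks:
  assumes "Fs \<noteq> []" "\<forall>F\<in>set Fs. F \<subseteq> X \<and> large (omega_pow n) F"
    and "sorted_wrt set_less Fs" "sorted_wrt (homogeneous P) Fs" "Max (hd Fs) < length Fs"
  shows "grouping (omega_pow n) (omega_pow 1) X P Fs"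
  unfolding grouping_def
proof (intro conjI allI impI ballI)
  have F: "\<forall>F\<in>set Fs. finite F \<and> F \<noteq> {}"
    using assms(2) by (auto simp: omega_pow_def dest: large_finite large_nonempty)
  then show "large (omega_pow 1) {Max (Fs!i) |i. i < length Fs}"
    using large_omega_Max_blocks assms(1,3,5) by (simp add: omega_pow_def)
  fix i j
  assume ij: "i < j \<and> j < length Fs"
  then have "set_less (Fs!i) (Fs!j)" "homogeneous P (Fs!i) (Fs!j)"
    using assms(3,4) by (simp_all add: sorted_wrt_iff_nth_less)
  then show "Max (Fs!i) < Min (Fs!j)"
    by (intro set_less_Max_less_Min) (use F ij in auto)
  fix x x' y y'
  assume "x \<in> Fs!i" "x' \<in> Fs!i" "y \<in> Fs!j" "y' \<in> Fs!j"
  with \<open>homogeneous P (Fs!i) (Fs!j)\<close> show "P x y = P x' y'"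
    unfolding homogeneous_def by (elim exE) simp
qed (use assms(2) in \<open>auto dest: large_finite\<close>)

section \<open>Groupings of exp-sparse sets\<close>

lemma exp_sparse_two_pow_less:
  assumes "exp_sparse X" "x \<in> X" "y \<in> X" "x < y"
  shows "2 ^ x < y"
proof -
  have "(2::nat) ^ x \<le> 4 ^ x"
    by (simp add: power_mono)
  moreover have "4 ^ x < y"
    using assms by (simp add: exp_sparse_def)
  ultimately show ?thesis
    by linarith
qed

lemma exp_sparse_two_pow_card_less:
  assumes "exp_sparse X" "d \<in> X"
  shows "2 ^ card {x\<in>X. x < d} \<le> d"
proof (cases "{x\<in>X. x < d} = {}")
  case True
  with assms show ?thesis
    unfolding True by (auto simp: exp_sparse_def)
next
  case False
  have "finite {x\<in>X. x < d}"
    by (rule finite_subset[of _ "{..<d}"]) auto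
  define m where "m = Max {x\<in>X. x < d}"
  have m: "m \<in> X" "m < d"
    using Max_in[OF \<open>finite {x\<in>X. x < d}\<close> False] by (simp_all add: m_def)
  have "card {x\<in>X. x < d} \<le> card {..m}"
    using \<open>finite {x\<in>X. x < d}\<close> by (intro card_mono) (auto simp: m_def)
  then have "(2::nat) ^ card {x\<in>X. x < d} \<le> 2 ^ Suc m"
    by (intro power_increasing) simp_all
  also have "\<dots> \<le> 2 ^ (2 * m)"
    using assms(1) m(1) by (intro power_increasing) (auto simp: exp_sparse_def)
  also have "\<dots> = 4 ^ m"
    by (simp add: power_mult)
  also have "\<dots> < d"
    using assms m by (simp add: exp_sparse_def)
  finally show ?thesis
    by simp
qed

lemma exp_sparse_two_pow_card_Union_le:
  assumes "exp_sparse X" "\<forall>D\<in>set Ds. D \<subseteq> X" "sorted_wrt set_less Ds"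
    and "j < length Ds" "Ds!j \<noteq> {}" "finite (Ds!j)"
  shows "2 ^ card (\<Union>i<j. Ds!i) \<le> Min (Ds!j)"
proof -
  have "Min (Ds!j) \<in> Ds!j"
    using assms(5,6) by simp
  have "(\<Union>i<j. Ds!i) \<subseteq> {x\<in>X. x < Min (Ds!j)}"
  proof
    fix x
    assume "x \<in> (\<Union>i<j. Ds!i)"
    then obtain i where "i < j" "x \<in> Ds!i"
      by blast
    moreover from this(1) have "set_less (Ds!i) (Ds!j)" "Ds!i \<subseteq> X"
      using assms(2-4) by (simp_all add: sorted_wrt_iff_nth_less)
    ultimately show "x \<in> {x\<in>X. x < Min (Ds!j)}"
      using \<open>Min (Ds!j) \<in> Ds!j\<close> by (auto simp: set_less_def)
  qed
  then have "card (\<Union>i<j. Ds!i) \<le> card {x\<in>X. x < Min (Ds!j)}"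
    by (intro card_mono) (auto intro: finite_subset[of _ "{..<Min (Ds!j)}"])
  then have "(2::nat) ^ card (\<Union>i<j. Ds!i) \<le> 2 ^ card {x\<in>X. x < Min (Ds!j)}"
    by (intro power_increasing) simp_all
  also have "\<dots> \<le> Min (Ds!j)"
    using assms(1,2,4) \<open>Min (Ds!j) \<in> Ds!j\<close> by (intro exp_sparse_two_pow_card_less) auto
  finally show ?thesis .
qed

lemma exp_sparse_two_pow_card_mul_Max_less:
  assumes "exp_sparse X" "H \<subseteq> X" "finite H" "H \<noteq> {}" "q \<in> X" "Max H < q"
  shows "2 ^ card H * Max H < q"
proof -
  define M where "M = Max H"
  have "M \<in> X"
    using assms(2-4) Max_in unfolding M_def by blast
  have "\<forall>x\<in>H. 3 \<le> x"
    using assms(1,2) by (auto simp: exp_sparse_def)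
  then have "H \<subseteq> {1..M}"
    using assms(3) by (auto simp: M_def)
  then have "card H \<le> M"
    using card_mono[of "{1..M}" H] by simp
  then have "2 ^ card H * M \<le> 2 ^ M * 2 ^ M"
    by (intro mult_mono power_increasing less_imp_le[OF less_exp]) simp_all
  also have "\<dots> = 4 ^ M"
    by (simp flip: power_mult_distrib)
  also have "\<dots> < q"
    using assms(1,5,6) \<open>M \<in> X\<close> by (simp add: exp_sparse_def M_def)
  finally show ?thesis
    by (simp add: M_def)
qed

lemma exp_sparse_weighted_blocks:
  assumes "exp_sparse X" "sorted_wrt set_less Ds"
    and "\<forall>D\<in>set Ds. D \<subseteq> X \<and> large [Suc (Suc n)] D" "\<forall>x\<in>\<Union>(set Ds). 2 ^ length Ds \<le> x"
  shows "weighted_blocks (Suc n) (map (\<lambda>D. D - {Min D}) Ds)"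
proof -
  define Es where "Es = map (\<lambda>D. D - {Min D}) Ds"
  have sub: "list_all2 (\<subseteq>) Es Ds"
    by (auto simp: Es_def list_all2_map1 intro: list_all2_refl)
  have "\<forall>j<length Ds. large (replicate (2 ^ card (\<Union>i<j. Ds!i)) (Suc n)) (Es!j)"
  proof (intro allI impI)
    fix j
    assume "j < length Ds"
    with assms(3) have "large [Suc (Suc n)] (Ds!j)"
      by simp
    then have "Ds!j \<noteq> {}" "finite (Ds!j)" "large (replicate (Min (Ds!j)) (Suc n)) (Es!j)"
      using \<open>j < length Ds\<close> by (simp_all add: large_omega_pow_Suc_iff Es_def)
    moreover have "2 ^ card (\<Union>i<j. Ds!i) \<le> Min (Ds!j)"
      using assms(1-3) \<open>j < length Ds\<close> calculation(1,2)
      by (intro exp_sparse_two_pow_card_Union_le) auto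
    ultimately show "large (replicate (2 ^ card (\<Union>i<j. Ds!i)) (Suc n)) (Es!j)"
      using large_replicate_le by blast
  qed
  then have "\<forall>j<length Es. large (replicate (2 ^ card (\<Union>i<j. Es!i)) (Suc n)) (Es!j)"
    using sub assms(3) by (intro large_block_weights_subsets) (auto intro: large_finite)
  moreover have "sorted_wrt set_less Es"
    using sub assms(2) by (rule sorted_wrt_set_less_subsets)
  moreover have "\<forall>x\<in>\<Union>(set Es). 2 ^ length Es \<le> x"
    using assms(4) Union_set_subset_if_list_all2[OF sub] by (auto simp: Es_def)
  ultimately show ?thesis
    by (simp add: weighted_blocks_def Es_def)
qed

lemma exp_sparse_homogeneous_blocks:
  assumes "exp_sparse X" "Q \<subseteq> X" "large (replicate M (n + 2)) Q" "\<forall>y\<in>Q. 2 ^ M \<le> y"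
  obtains Gs where "length Gs = M" "\<forall>G\<in>set Gs. G \<subseteq> Q \<and> large [n] G"
    "sorted_wrt set_less Gs" "sorted_wrt (homogeneous P) Gs"
proof -
  obtain Ds where Ds: "length Ds = M" "\<forall>D\<in>set Ds. D \<subseteq> Q \<and> large [Suc (Suc n)] D"
      "sorted_wrt set_less Ds"
    using large_replicate_blocks[OF assms(3)] by auto
  define Es where "Es = map (\<lambda>D. D - {Min D}) Ds"
  have "\<forall>D\<in>set Ds. D \<subseteq> X \<and> large [Suc (Suc n)] D" "\<forall>x\<in>\<Union>(set Ds). 2 ^ length Ds \<le> x"
    using Ds(1,2) assms(2,4) by auto
  from homogeneous_subblocks[OF exp_sparse_weighted_blocks[OF assms(1) Ds(3) this, folded Es_def]]
  obtain Gs where Gs: "list_all2 (\<lambda>G E. G \<subseteq> E \<and> large [n] G) Gs Es" "sorted_wrt (homogeneous P) Gs"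
    by blast
  have Es_Ds: "list_all2 (\<subseteq>) Es Ds"
    by (auto simp: Es_def list_all2_map1 intro: list_all2_refl)
  have Gs_Ds: "list_all2 (\<lambda>G D. G \<subseteq> D \<and> large [n] G) Gs Ds"
    by (rule list_all2_trans[OF _ Gs(1) Es_Ds]) auto
  have "list_all2 (\<subseteq>) Gs Ds"
    using Gs_Ds by (rule list_all2_mono) simp
  then have "sorted_wrt set_less Gs"
    using Ds(3) by (rule sorted_wrt_set_less_subsets)
  moreover have "\<forall>G\<in>set Gs. G \<subseteq> Q \<and> large [n] G"
    using list_all2_set1_bex[OF Gs_Ds] Ds(2) by blast
  moreover have "length Gs = M"
    using Gs_Ds Ds(1) by (simp add: list_all2_lengthD)
  ultimately show thesis
    using Gs(2) that by blast
qed

lemma exp_sparse_large_split: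
  assumes "exp_sparse X" "large [n + 6] X"
  obtains S\<^sub>1 S\<^sub>2 where "S\<^sub>1 \<union> S\<^sub>2 \<subseteq> X" "set_less S\<^sub>1 S\<^sub>2" "large [Suc n] S\<^sub>1" "large [Suc (n + 2)] S\<^sub>2"
proof -
  have "n + 6 = Suc (n + 5)"
    by simp
  with assms(2) have X: "large [Suc (n + 5)] X"
    by (simp only:)
  then have "Min X \<in> X"
    unfolding large_omega_pow_Suc_iff by simp
  with assms(1) have "2 \<le> Min X"
    by (auto simp: exp_sparse_def)
  with X obtain S\<^sub>1 S\<^sub>2
    where S: "S\<^sub>1 \<union> S\<^sub>2 \<subseteq> X" "set_less S\<^sub>1 S\<^sub>2" "large [n + 5] S\<^sub>1" "large [n + 5] S\<^sub>2"
    by (rule large_omega_pow_Suc_split)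
  moreover have "0 \<notin> X"
    using assms(1) by (auto simp: exp_sparse_def)
  then have "0 \<notin> S\<^sub>1" "0 \<notin> S\<^sub>2"
    using S(1) by auto
  ultimately show thesis
    by (intro that[of S\<^sub>1 S\<^sub>2]) (simp_all add: large_omega_pow_le)
qed

lemma exp_sparse_homogeneous_head:
  assumes "exp_sparse X" "S\<^sub>1 \<union> S\<^sub>2 \<subseteq> X" "set_less S\<^sub>1 S\<^sub>2" "large [Suc n] S\<^sub>1" "large [Suc (n + 2)] S\<^sub>2"
  obtains G Q M where "G \<subseteq> S\<^sub>1" "large [n] G" "Max G \<le> M" "Q \<subseteq> S\<^sub>2"
    "large (replicate M (n + 2)) Q" "\<forall>y\<in>Q. 2 ^ M \<le> y" "homogeneous P G Q"
proof -
  define H where "H = S\<^sub>1 - {Min S\<^sub>1}"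
  define q where "q = Min S\<^sub>2"
  have "Min S\<^sub>1 \<in> S\<^sub>1" "q \<in> S\<^sub>2"
    using assms(4,5) unfolding large_omega_pow_Suc_iff q_def by simp_all
  with assms(2) have "Min S\<^sub>1 \<in> X" "q \<in> X"
    by auto
  with assms(1) have "2 \<le> Min S\<^sub>1"
    by (auto simp: exp_sparse_def)
  moreover have "large (replicate (Min S\<^sub>1) n) H"
    using assms(4) unfolding large_omega_pow_Suc_iff H_def by simp
  ultimately have H: "large (replicate 2 n) H"
    by (simp add: large_replicate_le)
  then have "finite H" "H \<noteq> {}"
    by (auto intro: large_finite dest: large_nonempty)
  then have "Max H \<in> H"
    by simp
  then have "Max H \<in> S\<^sub>1" "Max H \<in> X"
    using assms(2) unfolding H_def by blast+
  have Max_H: "Max H < y" if "y \<in> S\<^sub>2" for y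
    using assms(3) \<open>Max H \<in> S\<^sub>1\<close> that by (simp add: set_less_def)
  have "H \<subseteq> X"
    using assms(2) by (auto simp: H_def)
  then have "2 ^ card H * Max H < q"
    using exp_sparse_two_pow_card_mul_Max_less assms(1) \<open>finite H\<close> \<open>H \<noteq> {}\<close> \<open>q \<in> X\<close>
      Max_H[OF \<open>q \<in> S\<^sub>2\<close>]
    by blast
  moreover have "large (replicate q (n + 2)) (S\<^sub>2 - {q})"
    using assms(5) unfolding large_omega_pow_Suc_iff q_def by simp
  ultimately have "large (replicate (2 ^ card H * Max H) (n + 2)) (S\<^sub>2 - {q})"
    by (simp add: large_replicate_le)
  with H obtain G Q where GQ: "G \<subseteq> H" "large [n] G" "Q \<subseteq> S\<^sub>2 - {q}"
      "large (replicate (Max H) (n + 2)) Q" "homogeneous P G Q"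
    by (rule large_homogeneous_rectangle)
  have "Max G \<le> Max H"
    using GQ(1,2) \<open>finite H\<close> by (auto intro: Max_mono dest: large_nonempty)
  moreover have "2 ^ Max H \<le> y" if "y \<in> Q" for y
  proof -
    have "y \<in> S\<^sub>2" "y \<in> X"
      using that GQ(3) assms(2) by auto
    with exp_sparse_two_pow_less[OF assms(1) \<open>Max H \<in> X\<close>] Max_H show ?thesis
      by (simp add: less_imp_le)
  qed
  ultimately show thesis
    using GQ by (intro that[where G = G and Q = Q and M = "Max H"]) (auto simp: H_def)
qed

theorem lemma2p7:
  fixes X :: "nat set" and n :: nat
  assumes "finite X" and "large (omega_pow (n + 6)) X" and "exp_sparse X"
  shows "\<forall>P :: nat \<Rightarrow> nat \<Rightarrow> bool. \<exists>Fs. grouping (omega_pow n) (omega_pow 1) X P Fs"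
proof
  fix P :: "nat \<Rightarrow> nat \<Rightarrow> bool"
  obtain S\<^sub>1 S\<^sub>2 where S: "S\<^sub>1 \<union> S\<^sub>2 \<subseteq> X" "set_less S\<^sub>1 S\<^sub>2" "large [Suc n] S\<^sub>1" "large [Suc (n + 2)] S\<^sub>2"
    using exp_sparse_large_split[OF assms(3) assms(2)[unfolded omega_pow_def]] .
  obtain G Q M where G: "G \<subseteq> S\<^sub>1" "large [n] G" "Max G \<le> M"
      and Q: "Q \<subseteq> S\<^sub>2" "large (replicate M (n + 2)) Q" "\<forall>y\<in>Q. 2 ^ M \<le> y"
      and GQ: "homogeneous P G Q"
    using exp_sparse_homogeneous_head[OF assms(3) S] .
  obtain Gs where Gs: "length Gs = M" "\<forall>G'\<in>set Gs. G' \<subseteq> Q \<and> large [n] G'"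
      "sorted_wrt set_less Gs" "sorted_wrt (homogeneous P) Gs"
    using exp_sparse_homogeneous_blocks[OF assms(3) _ Q(2,3)] Q(1) S(1) by blast
  have "grouping (omega_pow n) (omega_pow 1) X P (G # Gs)"
  proof (rule grouping_if_homogeneous_blocks)
    have "G \<subseteq> X" "Q \<subseteq> X"
      using G(1) Q(1) S(1) by auto
    with G(2) Gs(2) show "\<forall>F\<in>set (G # Gs). F \<subseteq> X \<and> large (omega_pow n) F"
      by (auto simp: omega_pow_def)
    show "sorted_wrt set_less (G # Gs)"
      using Gs(2,3) set_less_subset[OF S(2) G(1)] Q(1) by auto
    show "sorted_wrt (homogeneous P) (G # Gs)"
      using Gs(2,4) homogeneous_subset[OF GQ order_refl] by simp
    show "Max (hd (G # Gs)) < length (G # Gs)"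
      using G(3) Gs(1) by simp
  qed simp
  then show "\<exists>Fs. grouping (omega_pow n) (omega_pow 1) X P Fs" ..
qed

end
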